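(* Let $d\in\mathbb{N}$ with $d\ge 2$ and $0<\eta<1/d$. Then $E_+(1+1/\eta)\subseteq \mathcal{D}(\eta)^c\setminus K_d^c$.
   Context: For $\boldsymbol{x}\in\mathbb{R}^d$, $|\boldsymbol{x}|=\max_i|x_i|$; $\|x\|$ denotes distance from $x\in\mathbb{R}$ to the nearest integer, and for vectors $\|\boldsymbol{x}\|=\min_{\boldsymbol{p}\in\mathbb{Z}^d}|\boldsymbol{x}-\boldsymbol{p}|$. $\boldsymbol{r}\boldsymbol{\alpha}$ is the standard inner product. For $\boldsymbol{\alpha}\in\mathbb{R}^d$, $\mathcal{A}_\eta(\boldsymbol{\alpha})$ is the set of accumulation points of $\{|q|^{\eta}(q\boldsymbol{\alpha}-\boldsymbol{p}):q\in\mathbb{Z}\setminus\{0\},\ \boldsymbol{p}\in\mathbb{Z}^d\}$, $\mathcal{D}(\eta)=\{\boldsymbol{\alpha}:\mathcal{A}_\eta(\boldsymbol{\alpha})=\mathbb{R}^d\}$, $\mathcal{D}(\eta)^c=\mathbb{R}^d\setminus\mathcal{D}(\eta)$. $K_d$ is the set of $\boldsymbol{\alpha}\in\mathbb{R}^d$ with $1,\alpha_1,\dots,\alpha_d$ linearly independent over $\mathbb{Q}$, $K_d^c=\mathbb{R}^d\setminus K_d$. For $\omega\ge d$, \[E_+(\omega)=\left\{\boldsymbol{\alpha}\in K_d:\lim_{R\to\infty}R^\omega\min\{\|\boldsymbol{r}\boldsymbol{\alpha}\|:\boldsymbol{r}\in\mathbb{Z}^d\setminus\{\boldsymbol{0}\},\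 0\le r_1,\ldots,r_d\le R\}=0\right\}.\] *)

theory Defs
  imports "HOL-Analysis.Analysis"
begin

text \<open>Vectors in R^d are rendered as real^'n with d = CARD('n).\<close>

definition int_vec :: "(real^'n) \<Rightarrow> bool" where
  "int_vec p \<longleftrightarrow> (\<forall>i. p $ i \<in> \<int>)"

definition dist_int :: "real \<Rightarrow> real" where
  "dist_int x = Inf {\<bar>x - of_int k\<bar> | k::int. True}"

definition A_eta :: "real \<Rightarrow> real^'n \<Rightarrow> (real^'n) set" where
  "A_eta eta alpha =
     {x. x islimpt {(real_of_int \<bar>q\<bar> powr eta) *\<^sub>R (of_int q *\<^sub>R alpha - p)
                   | q p. q \<noteq> 0 \<and> int_vec p}}"

definition D_eta :: "real \<Rightarrow> (real^'n) set" where
  "D_eta eta = {alpha. A_eta eta alpha = UNIV}"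

definition K_set :: "(real^'n) set" where
  "K_set = {alpha. \<forall>(c0::real) (c::'n \<Rightarrow> real). c0 \<in> \<rat> \<and> (\<forall>i. c i \<in> \<rat>) \<and>
              c0 + (\<Sum>i\<in>UNIV. c i * alpha $ i) = 0 \<longrightarrow> c0 = 0 \<and> (\<forall>i. c i = 0)}"

definition min_approx :: "real^'n \<Rightarrow> real \<Rightarrow> real" where
  "min_approx alpha R =
     Min ((\<lambda>r::int^'n. dist_int (\<Sum>i\<in>UNIV. of_int (r $ i) * alpha $ i))
          ` {r. r \<noteq> 0 \<and> (\<forall>i. 0 \<le> r $ i \<and> real_of_int (r $ i) \<le> R)})"

definition E_plus :: "real \<Rightarrow> (real^'n) set" where
  "E_plus omega = {alpha \<in> K_set.
     ((\<lambda>R. R powr omega * min_approx alpha R) \<longlongrightarrow> 0) at_top}"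

end

theory Submission
  imports Defs
begin

(* Let x = |q|^eta (q alpha - p) lie within 1/2 of (1,...,1) in the max norm, and put P = |q|^eta.
   Take the nonzero r in [0, P/4d]^d minimising ||r.alpha||.  Since (P/4d)^(1 + 1/eta) is a constant
   multiple of P |q|, membership of alpha in E_+(1 + 1/eta) gives P |q| ||r.alpha|| < 1/4 once |q| is
   large.  Then r.x = P k + e with k an integer and |e| < 1/4, whereas 1/2 <= r.x <= 3P/8: impossible.
   So only finitely many q, and with them finitely many p, produce points near (1,...,1), which
   therefore is not an accumulation point. *)

lemma finite_vector:
  fixes B :: "'n::finite \<Rightarrow> 'a set"
  assumes "\<And>i. finite (B i)"
  shows "finite {V. \<forall>i::'n. V $ i \<in> B i}"
proof -
  have "{V. \<forall>i::'n. V $ i \<in> B i} \<subseteq> vec_lambda ` Pi\<^sub>E UNIV B"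
  proof
    fix V :: "'a^'n" assume "V \<in> {V. \<forall>i. V $ i \<in> B i}"
    then have "vec_nth V \<in> Pi\<^sub>E UNIV B" by auto
    then show "V \<in> vec_lambda ` Pi\<^sub>E UNIV B"
      by (rule rev_image_eqI) (simp add: vec_nth_inverse)
  qed
  moreover have "finite (vec_lambda ` Pi\<^sub>E UNIV B)"
    using assms by (simp add: finite_PiE)
  ultimately show ?thesis
    by (rule finite_subset)
qed

lemma finite_scaled_approximations:
  fixes \<alpha> :: "real^'n"
  assumes "0 \<le> eta"
  shows "finite {(of_int \<bar>q\<bar> powr eta) *\<^sub>R (of_int q *\<^sub>R \<alpha> - p) | q p.
                   q \<noteq> 0 \<and> \<bar>q\<bar> \<le> N \<and> int_vec p \<and>
                   norm ((of_int \<bar>q\<bar> powr eta) *\<^sub>R (of_int q *\<^sub>R \<alpha> - p)) \<le> C}"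
    (is "finite ?S")
proof -
  define M where "M = of_int N * norm \<alpha> + C"
  define P where "P = {p::real^'n. \<forall>i. p $ i \<in> {k \<in> \<int>. \<bar>k\<bar> \<le> M}}"
  have "?S \<subseteq> (\<lambda>(q, p). (of_int \<bar>q\<bar> powr eta) *\<^sub>R (of_int q *\<^sub>R \<alpha> - p)) ` ({-N..N} \<times> P)"
  proof clarify
    fix q :: int and p :: "real^'n"
    assume q: "q \<noteq> 0" "\<bar>q\<bar> \<le> N" and p: "int_vec p"
      and C: "norm ((of_int \<bar>q\<bar> powr eta) *\<^sub>R (of_int q *\<^sub>R \<alpha> - p)) \<le> C"
    have "\<bar>p $ i\<bar> \<le> M" for i
    proof -
      have "1 \<le> of_int \<bar>q\<bar> powr eta"
        using q assms by (simp add: ge_one_powr_ge_zero)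
      then have "\<bar>of_int q * \<alpha> $ i - p $ i\<bar> \<le> of_int \<bar>q\<bar> powr eta * \<bar>of_int q * \<alpha> $ i - p $ i\<bar>"
        by (simp add: mult_le_cancel_right1)
      also have "\<dots> \<le> C"
        using component_le_norm_cart[of "(of_int \<bar>q\<bar> powr eta) *\<^sub>R (of_int q *\<^sub>R \<alpha> - p)" i] C
        by (simp add: abs_mult)
      finally have "\<bar>of_int q * \<alpha> $ i - p $ i\<bar> \<le> C" .
      moreover have "\<bar>of_int q * \<alpha> $ i\<bar> \<le> of_int N * norm \<alpha>"
        using q component_le_norm_cart[of \<alpha> i] by (simp add: abs_mult mult_mono)
      ultimately show ?thesis
        by (simp add: M_def)
    qed
    with p have "p \<in> P"
      by (auto simp: P_def int_vec_def)
    with q show "(of_int \<bar>q\<bar> powr eta) *\<^sub>R (of_int q *\<^sub>R \<alpha> - p)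
        \<in> (\<lambda>(q, p). (of_int \<bar>q\<bar> powr eta) *\<^sub>R (of_int q *\<^sub>R \<alpha> - p)) ` ({-N..N} \<times> P)"
      by (intro rev_image_eqI[of "(q, p)"]) auto
  qed
  moreover have "finite P"
    unfolding P_def by (intro finite_vector finite_abs_int_segment)
  ultimately show ?thesis
    by (elim finite_subset) simp
qed

lemma dist_int_eq_abs_round: "dist_int x = \<bar>x - of_int (round x)\<bar>"
  unfolding dist_int_def
  by (rule cInf_eq_minimum) (auto intro: round_diff_minimal)

lemma min_approx_attained:
  fixes \<alpha> :: "real^'n"
  assumes "1 \<le> R"
  obtains r :: "int^'n"
  where "r \<noteq> 0" "\<And>i. 0 \<le> r $ i \<and> of_int (r $ i) \<le> R"
    and "min_approx \<alpha> R = dist_int (\<Sum>i\<in>UNIV. of_int (r $ i) * \<alpha> $ i)"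
proof -
  define box where "box = {r::int^'n. r \<noteq> 0 \<and> (\<forall>i. 0 \<le> r $ i \<and> of_int (r $ i) \<le> R)}"
  have "box \<subseteq> {r. \<forall>i. r $ i \<in> {0..\<lfloor>R\<rfloor>}}"
    by (auto simp: box_def le_floor_iff)
  then have "finite box"
    by (rule finite_subset) (use finite_vector[of "\<lambda>_. {0..\<lfloor>R\<rfloor>}"] in simp)
  moreover have "(\<chi> i. 1) \<in> box"
    using assms by (auto simp: box_def vec_eq_iff)
  ultimately have "min_approx \<alpha> R \<in> (\<lambda>r. dist_int (\<Sum>i\<in>UNIV. of_int (r $ i) * \<alpha> $ i)) ` box"
    unfolding min_approx_def box_def[symmetric] by (intro Min_in) auto
  then show thesis
    using that by (auto simp: box_def)
qed

lemma positive_combination_far_from_multiples: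
  fixes x :: "real^'n" and r :: "int^'n"
  assumes x: "\<And>i. 1/2 < x $ i \<and> x $ i < 3/2"
    and "r \<noteq> 0"
    and r: "\<And>i. 0 \<le> r $ i \<and> 4 * real CARD('n) * of_int (r $ i) \<le> P"
    and "1 \<le> P" and "k \<in> \<int>"
  shows "1/4 \<le> \<bar>(\<Sum>i\<in>UNIV. of_int (r $ i) * x $ i) - P * k\<bar>"
proof -
  define T where "T = (\<Sum>i\<in>UNIV. of_int (r $ i) * x $ i)"
  obtain j where "r $ j \<noteq> 0"
    using \<open>r \<noteq> 0\<close> by (auto simp: vec_eq_iff)
  with r have "1 \<le> r $ j"
    by (metis int_one_le_iff_zero_less order_le_less)
  then have "1 * (1/2) \<le> of_int (r $ j) * x $ j"
    using x[of j] by (intro mult_mono) auto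
  also have "\<dots> \<le> T"
  proof -
    have "0 \<le> of_int (r $ i) * x $ i" for i
      using r[of i] x[of i] by simp
    then show ?thesis
      unfolding T_def by (intro member_le_sum) auto
  qed
  finally have T_lower: "1/2 \<le> T"
    by simp
  have "T \<le> real CARD('n) * (P / (4 * real CARD('n)) * (3/2))"
    unfolding T_def
  proof (rule sum_bounded_above)
    fix i
    have "of_int (r $ i) \<le> P / (4 * real CARD('n))"
      using r[of i] by (simp add: field_simps)
    then show "of_int (r $ i) * x $ i \<le> P / (4 * real CARD('n)) * (3/2)"
      using r[of i] x[of i] by (intro mult_mono) auto
  qed
  also have "\<dots> = 3/8 * P"
    by simp
  finally have T_upper: "T \<le> 3/8 * P" .
  obtain n :: int where k: "k = of_int n"
    using \<open>k \<in> \<int>\<close> by (auto elim: Ints_cases)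
  consider "n \<le> -1" | "n = 0" | "1 \<le> n"
    by linarith
  then show ?thesis
  proof cases
    case 1
    then have "P * k \<le> P * (-1)"
      using \<open>1 \<le> P\<close> k by (intro mult_left_mono) auto
    with T_lower \<open>1 \<le> P\<close> show ?thesis
      unfolding T_def[symmetric] by linarith
  next
    case 2
    with T_lower k show ?thesis
      unfolding T_def[symmetric] by simp
  next
    case 3
    then have "P * 1 \<le> P * k"
      using \<open>1 \<le> P\<close> k by (intro mult_left_mono) auto
    with T_upper \<open>1 \<le> P\<close> show ?thesis
      unfolding T_def[symmetric] by linarith
  qed
qed

lemma powr_div_const_powr:
  fixes Q c eta :: real
  assumes "0 < Q" and "0 < c" and "0 < eta"
  shows "(Q powr eta / c) powr (1 + 1/eta) = Q powr eta * Q / c powr (1 + 1/eta)"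
proof -
  have "(Q powr eta / c) powr (1 + 1/eta) = Q powr (eta * (1 + 1/eta)) / c powr (1 + 1/eta)"
    using assms by (simp add: powr_divide powr_powr)
  also have "eta * (1 + 1/eta) = eta + 1"
    using assms by (simp add: field_simps)
  finally show ?thesis
    using assms by (simp add: powr_add)
qed

lemma filterlim_powr_div_at_top:
  fixes eta c :: real
  assumes "0 < eta" and "0 < c"
  shows "filterlim (\<lambda>Q. Q powr eta / c) at_top at_top"
  unfolding filterlim_at_top
proof
  fix Z
  show "\<forall>\<^sub>F Q in at_top. Z \<le> Q powr eta / c"
    using eventually_ge_at_top[of "(c * max Z 0) powr (1/eta)"]
  proof eventually_elim
    case (elim Q)
    then have "((c * max Z 0) powr (1/eta)) powr eta \<le> Q powr eta"
      using \<open>0 < eta\<close> by (intro powr_mono2) auto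
    then have "c * max Z 0 \<le> Q powr eta"
      using assms by (simp add: powr_powr)
    moreover have "c * Z \<le> c * max Z 0"
      using \<open>0 < c\<close> by (intro mult_left_mono) auto
    ultimately have "c * Z \<le> Q powr eta"
      by linarith
    then show ?case
      using \<open>0 < c\<close> by (simp add: pos_le_divide_eq mult.commute)
  qed
qed

lemma E_plus_approximation:
  fixes \<alpha> :: "real^'n"
  assumes \<alpha>: "\<alpha> \<in> E_plus (1 + 1/eta)" and "0 < eta" and "0 < c" and "0 < \<epsilon>"
  shows "\<forall>\<^sub>F Q in at_top. \<exists>r::int^'n. r \<noteq> 0 \<and>
      (\<forall>i. 0 \<le> r $ i \<and> c * of_int (r $ i) \<le> Q powr eta) \<and>
      Q powr eta * Q * dist_int (\<Sum>i\<in>UNIV. of_int (r $ i) * \<alpha> $ i) < \<epsilon>"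
proof -
  define \<omega> where "\<omega> = 1 + 1/eta"
  have "((\<lambda>R. R powr \<omega> * min_approx \<alpha> R) \<longlongrightarrow> 0) at_top"
    using \<alpha> by (simp add: E_plus_def \<omega>_def)
  then have "\<forall>\<^sub>F R in at_top. \<bar>R powr \<omega> * min_approx \<alpha> R\<bar> < \<epsilon> / c powr \<omega>"
    using assms by (auto dest: tendstoD[where e = "\<epsilon> / c powr \<omega>"] simp: dist_real_def)
  then have "\<forall>\<^sub>F R in at_top. 1 \<le> R \<and> \<bar>R powr \<omega> * min_approx \<alpha> R\<bar> < \<epsilon> / c powr \<omega>"
    by (intro eventually_conj eventually_ge_at_top)
  moreover have "filterlim (\<lambda>Q. Q powr eta / c) at_top at_top"
    using \<open>0 < eta\<close> \<open>0 < c\<close> by (rule filterlim_powr_div_at_top)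
  ultimately have "\<forall>\<^sub>F Q in at_top. 1 \<le> Q powr eta / c \<and>
      \<bar>(Q powr eta / c) powr \<omega> * min_approx \<alpha> (Q powr eta / c)\<bar> < \<epsilon> / c powr \<omega>"
    by (rule eventually_compose_filterlim)
  moreover have "\<forall>\<^sub>F Q in at_top. 0 < (Q::real)"
    by (rule eventually_gt_at_top)
  ultimately show ?thesis
  proof eventually_elim
    case (elim Q)
    define R where "R = Q powr eta / c"
    have "1 \<le> R"
      using elim by (simp add: R_def)
    obtain r :: "int^'n" where r: "r \<noteq> 0" "\<And>i. 0 \<le> r $ i \<and> of_int (r $ i) \<le> R"
      and min: "min_approx \<alpha> R = dist_int (\<Sum>i\<in>UNIV. of_int (r $ i) * \<alpha> $ i)"
      using min_approx_attained[OF \<open>1 \<le> R\<close>] by blast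
    have "R powr \<omega> = Q powr eta * Q / c powr \<omega>"
      unfolding R_def \<omega>_def using \<open>0 < Q\<close> \<open>0 < c\<close> \<open>0 < eta\<close> by (rule powr_div_const_powr)
    with elim min
    have "Q powr eta * Q * dist_int (\<Sum>i\<in>UNIV. of_int (r $ i) * \<alpha> $ i) / c powr \<omega>
        < \<epsilon> / c powr \<omega>"
      using \<open>0 < c\<close> by (simp add: R_def dist_int_eq_abs_round abs_mult)
    then have "Q powr eta * Q * dist_int (\<Sum>i\<in>UNIV. of_int (r $ i) * \<alpha> $ i) < \<epsilon>"
      using \<open>0 < c\<close> by (simp add: divide_less_cancel)
    moreover have "c * of_int (r $ i) \<le> Q powr eta" for i
      using r(2)[of i] \<open>0 < c\<close> by (simp add: R_def field_simps)
    ultimately show ?case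
      using r by blast
  qed
qed

lemma E_plus_scaled_approximations_avoid_ones:
  fixes \<alpha> :: "real^'n"
  assumes "\<alpha> \<in> E_plus (1 + 1/eta)" and "0 < eta"
  obtains Q0 :: real where "\<And>q p. q \<noteq> 0 \<Longrightarrow> int_vec p \<Longrightarrow> Q0 \<le> of_int \<bar>q\<bar> \<Longrightarrow>
      1/2 \<le> dist ((of_int \<bar>q\<bar> powr eta) *\<^sub>R (of_int q *\<^sub>R \<alpha> - p)) (\<chi> i. 1)"
proof -
  have "\<forall>\<^sub>F Q in at_top. \<exists>r::int^'n. r \<noteq> 0 \<and>
      (\<forall>i. 0 \<le> r $ i \<and> 4 * real CARD('n) * of_int (r $ i) \<le> Q powr eta) \<and>
      Q powr eta * Q * dist_int (\<Sum>i\<in>UNIV. of_int (r $ i) * \<alpha> $ i) < 1/4"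
    using assms by (intro E_plus_approximation) auto
  then obtain Q0 where Q0: "\<And>Q. Q0 \<le> Q \<Longrightarrow> \<exists>r::int^'n. r \<noteq> 0 \<and>
      (\<forall>i. 0 \<le> r $ i \<and> 4 * real CARD('n) * of_int (r $ i) \<le> Q powr eta) \<and>
      Q powr eta * Q * dist_int (\<Sum>i\<in>UNIV. of_int (r $ i) * \<alpha> $ i) < 1/4"
    by (auto simp: eventually_at_top_linorder)
  show thesis
  proof (rule that[of Q0], rule ccontr)
    fix q :: int and p :: "real^'n"
    assume q: "q \<noteq> 0" and p: "int_vec p" and "Q0 \<le> of_int \<bar>q\<bar>"
      and near: "\<not> 1/2 \<le> dist ((of_int \<bar>q\<bar> powr eta) *\<^sub>R (of_int q *\<^sub>R \<alpha> - p)) (\<chi> i. 1)"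
    define P where "P = of_int \<bar>q\<bar> powr eta"
    define x where "x = P *\<^sub>R (of_int q *\<^sub>R \<alpha> - p)"
    have x: "1/2 < x $ i \<and> x $ i < 3/2" for i
      using dist_vec_nth_le[of x i "\<chi> i. 1"] near by (auto simp: x_def P_def dist_real_def)
    have "1 \<le> P"
      using q \<open>0 < eta\<close> by (simp add: P_def ge_one_powr_ge_zero)
    obtain r :: "int^'n" where r: "r \<noteq> 0" "\<And>i. 0 \<le> r $ i \<and> 4 * real CARD('n) * of_int (r $ i) \<le> P"
      and small: "P * of_int \<bar>q\<bar> * dist_int (\<Sum>i\<in>UNIV. of_int (r $ i) * \<alpha> $ i) < 1/4"
      using Q0[OF \<open>Q0 \<le> of_int \<bar>q\<bar>\<close>] unfolding P_def by blast
    define a where "a = (\<Sum>i\<in>UNIV. of_int (r $ i) * \<alpha> $ i)"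
    define k where "k = of_int q * of_int (round a) - (\<Sum>i\<in>UNIV. of_int (r $ i) * p $ i)"
    have "k \<in> \<int>"
      using p unfolding k_def int_vec_def by (intro Ints_diff Ints_mult Ints_sum) auto
    have "(\<Sum>i\<in>UNIV. of_int (r $ i) * x $ i)
        = P * (of_int q * a) - P * (\<Sum>i\<in>UNIV. of_int (r $ i) * p $ i)"
      by (simp add: x_def a_def algebra_simps sum_distrib_left sum_subtractf)
    then have "(\<Sum>i\<in>UNIV. of_int (r $ i) * x $ i) - P * k = P * (of_int q * (a - of_int (round a)))"
      by (simp add: k_def algebra_simps)
    then have "1/4 \<le> \<bar>P * (of_int q * (a - of_int (round a)))\<bar>"
      using positive_combination_far_from_multiples[OF x r \<open>1 \<le> P\<close> \<open>k \<in> \<int>\<close>] by simp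
    also have "\<dots> = P * of_int \<bar>q\<bar> * dist_int a"
      using \<open>1 \<le> P\<close> by (simp add: abs_mult dist_int_eq_abs_round)
    finally show False
      using small by (simp add: a_def)
  qed
qed

lemma not_islimpt_scaled_approximations:
  fixes \<alpha> y :: "real^'n" and Q0 :: real
  assumes "0 \<le> eta" and "0 < e"
    and far: "\<And>q p. q \<noteq> 0 \<Longrightarrow> int_vec p \<Longrightarrow> Q0 \<le> of_int \<bar>q\<bar> \<Longrightarrow>
      e \<le> dist ((of_int \<bar>q\<bar> powr eta) *\<^sub>R (of_int q *\<^sub>R \<alpha> - p)) y"
  shows "\<not> y islimpt {(of_int \<bar>q\<bar> powr eta) *\<^sub>R (of_int q *\<^sub>R \<alpha> - p) | q p. q \<noteq> 0 \<and> int_vec p}"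
    (is "\<not> y islimpt ?S")
proof -
  define F where "F = {(of_int \<bar>q\<bar> powr eta) *\<^sub>R (of_int q *\<^sub>R \<alpha> - p) | q p.
        q \<noteq> 0 \<and> \<bar>q\<bar> \<le> \<lceil>Q0\<rceil> \<and> int_vec p \<and>
        norm ((of_int \<bar>q\<bar> powr eta) *\<^sub>R (of_int q *\<^sub>R \<alpha> - p)) \<le> norm y + e}"
  have "?S \<inter> ball y e \<subseteq> F"
  proof
    fix z assume "z \<in> ?S \<inter> ball y e"
    then obtain q p where z: "z = (of_int \<bar>q\<bar> powr eta) *\<^sub>R (of_int q *\<^sub>R \<alpha> - p)"
      and q: "q \<noteq> 0" and p: "int_vec p" and near: "dist z y < e"
      by (auto simp: dist_commute)
    have "\<not> Q0 \<le> of_int \<bar>q\<bar>"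
      using far[OF q p] near z by auto
    then have "\<bar>q\<bar> \<le> \<lceil>Q0\<rceil>"
      using le_of_int_ceiling[of Q0] by linarith
    moreover have "norm z \<le> norm y + e"
      using near norm_triangle_ineq2[of z y] by (simp add: dist_norm)
    ultimately show "z \<in> F"
      unfolding F_def using z q p by blast
  qed
  moreover have "finite F"
    unfolding F_def using \<open>0 \<le> eta\<close> by (rule finite_scaled_approximations)
  ultimately have "finite (?S \<inter> ball y e)"
    by (rule finite_subset)
  then show ?thesis
    using \<open>0 < e\<close> by (auto simp: islimpt_eq_infinite_ball)
qed

theorem lemma7:
  fixes eta :: real
  assumes "CARD('n::finite) \<ge> 2"
    and "0 < eta" and "eta < 1 / real CARD('n)"
  shows "(E_plus (1 + 1 / eta) :: (real^'n) set)
           \<subseteq> (UNIV - D_eta eta) - (UNIV - K_set)"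
proof
  fix \<alpha> :: "real^'n"
  assume \<alpha>: "\<alpha> \<in> E_plus (1 + 1 / eta)"
  obtain Q0 :: real where far: "\<And>q p. q \<noteq> 0 \<Longrightarrow> int_vec p \<Longrightarrow> Q0 \<le> of_int \<bar>q\<bar> \<Longrightarrow>
      1/2 \<le> dist ((of_int \<bar>q\<bar> powr eta) *\<^sub>R (of_int q *\<^sub>R \<alpha> - p)) (\<chi> i. 1)"
    using E_plus_scaled_approximations_avoid_ones[OF \<alpha> \<open>0 < eta\<close>] by blast
  have "\<not> (\<chi> i. 1) islimpt
      {(of_int \<bar>q\<bar> powr eta) *\<^sub>R (of_int q *\<^sub>R \<alpha> - p) | q p. q \<noteq> 0 \<and> int_vec p}"
    using \<open>0 < eta\<close> by (intro not_islimpt_scaled_approximations[OF _ _ far]) auto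
  then have "\<alpha> \<notin> D_eta eta"
    by (auto simp: D_eta_def A_eta_def)
  moreover have "\<alpha> \<in> K_set"
    using \<alpha> by (simp add: E_plus_def)
  ultimately show "\<alpha> \<in> (UNIV - D_eta eta) - (UNIV - K_set)"
    by simp
qed

end
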